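(* Let $\Gamma$ be a network zero-sum game with a fully-mixed Nash equilibrium $x^*$ with rational coordinates such that $\sum_{j\neq i}A^{(ij)}x_j^*=\mathbf{0}$ for every agent $i$. Suppose the regularizers used in Stochastic FTRL satisfy $\nabla h_i^*(y_i)>\mathbf{0}$ (coordinatewise) for all $y\in\mathcal{Y}$ and all $i\in\mathcal{N}$. Then the Markov chain with state space $\mathcal{Y}$ and transition probabilities $\bar P$ is irreducible.
   Context: A network game has agents $\mathcal{N}=\{1,\dots,N\}$, finite pure strategy sets $\mathcal{S}_i$, simplices $\mathcal{X}_i$ of mixed strategies, $\mathcal{S}=\prod_i\mathcal{S}_i$, and payoff matrices $A^{(ij)}\in\mathbb{R}^{S_i\times S_j}$ ($i\ne j$); agent $i$'s expected payoff under $x$ is $\langle x_i,\sum_{j\ne i}A^{(ij)}x_j\rangle$. It is network zero-sum if $A^{(ij)}=-(A^{(ji)})^\top$. A Nash equilibrium $x^*$ satisfies $\langle x_i^*,\sum_{j\ne i}A^{(ij)}x_j^*\rangle\ge\langle x_i,\sum_{j\ne i}A^{(ij)}x_j^*\rangle$ for all $x_i\in\mathcal{X}_i$, $i$; it is fully mixed if all coordinates are positive. Each agent has a strictly convex regularizer $h_i$ on $\mathcal{X}_i$ (learning rate absorbed), conjugate $h_i^*(y_i)=\sup_{x_i\in\mathcal{X}_i}\{\langle y_i,x_i\rangle-h_i(x_i)\}$, and $\nabla h_i^*(y_i)=\arg\max_{x_i\in\mathcal{X}_i}\{\langle y_i,x_i\rangle-h_i(x_i)\}$ is the strategy played at payoff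 vector $y_i$. Fix an initial $y^0=(y_1^0,\dots,y_N^0)$. Define $\mathcal{Y}^0=\{y^0\}$ and $\mathcal{Y}^t=\{(y_i+\sum_{j\neq i}A^{(ij)}e_{s_j})_{i\in\mathcal{N}}: y\in\mathcal{Y}^{t-1},\ s\in\mathcal{S}\}$, and $\mathcal{Y}=\bigcup_{t\ge0}\mathcal{Y}^t$. The transition probabilities are $\bar P(y,y')=\sum_{s\in\mathcal{S}:\ y_i'=y_i+\sum_{j\ne i}A^{(ij)}e_{s_j}\ \forall i}\ \prod_{j=1}^N x_{js_j}$, where $x_j=\nabla h_j^*(y_j)$. *)

theory Defs
  imports "HOL-Analysis.Analysis" "HOL-Library.FuncSet"
begin

text \<open>Agents are 0,...,n-1; agent i has pure strategies 0,...,m i - 1.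
  Vectors indexed by pure strategies of agent i are functions nat => real of which only
  the coordinates below m i are relevant. A i j k l is the (k,l) entry of the payoff
  matrix of agent i against agent j.\<close>

definition strat_simplex :: "nat \<Rightarrow> (nat \<Rightarrow> real) set" where
  "strat_simplex d = {x. (\<forall>k<d. 0 \<le> x k) \<and> (\<Sum>k<d. x k) = 1 \<and> (\<forall>k\<ge>d. x k = 0)}"

definition ip :: "nat \<Rightarrow> (nat \<Rightarrow> real) \<Rightarrow> (nat \<Rightarrow> real) \<Rightarrow> real" where
  "ip d u v = (\<Sum>k<d. u k * v k)"

definition strictly_convex_on :: "(nat \<Rightarrow> real) set \<Rightarrow> ((nat \<Rightarrow> real) \<Rightarrow> real) \<Rightarrow> bool" where
  "strictly_convex_on S f \<longleftrightarrow>
     (\<forall>x\<in>S. \<forall>y\<in>S. \<forall>t::real. 0 < t \<and> t < 1 \<longrightarrow> (\<lambda>k. (1 - t) * x k + t * y k) \<in> S) \<and>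
     (\<forall>x\<in>S. \<forall>y\<in>S. x \<noteq> y \<longrightarrow> (\<forall>t::real. 0 < t \<and> t < 1 \<longrightarrow>
        f (\<lambda>k. (1 - t) * x k + t * y k) < (1 - t) * f x + t * f y))"

text \<open>Gradient of the convex conjugate: the maximiser of <y,x> - h x over the strat_simplex.\<close>
definition grad_conj :: "nat \<Rightarrow> ((nat \<Rightarrow> real) \<Rightarrow> real) \<Rightarrow> (nat \<Rightarrow> real) \<Rightarrow> (nat \<Rightarrow> real)" where
  "grad_conj d h y = (THE x. x \<in> strat_simplex d \<and>
      (\<forall>x'\<in>strat_simplex d. ip d y x' - h x' \<le> ip d y x - h x))"

definition network_zero_sum ::
  "nat \<Rightarrow> (nat \<Rightarrow> nat) \<Rightarrow> (nat \<Rightarrow> nat \<Rightarrow> nat \<Rightarrow> nat \<Rightarrow> real) \<Rightarrow> bool" where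
  "network_zero_sum n m A \<longleftrightarrow> (\<forall>i<n. \<forall>j<n. i \<noteq> j \<longrightarrow>
      (\<forall>k<m i. \<forall>l<m j. A i j k l = - A j i l k))"

definition payoff_vec ::
  "nat \<Rightarrow> (nat \<Rightarrow> nat) \<Rightarrow> (nat \<Rightarrow> nat \<Rightarrow> nat \<Rightarrow> nat \<Rightarrow> real) \<Rightarrow> (nat \<Rightarrow> nat \<Rightarrow> real)
     \<Rightarrow> nat \<Rightarrow> nat \<Rightarrow> real" where
  "payoff_vec n m A x i k = (\<Sum>j\<in>{0..<n}-{i}. \<Sum>l<m j. A i j k l * x j l)"

definition nash_eq ::
  "nat \<Rightarrow> (nat \<Rightarrow> nat) \<Rightarrow> (nat \<Rightarrow> nat \<Rightarrow> nat \<Rightarrow> nat \<Rightarrow> real) \<Rightarrow> (nat \<Rightarrow> nat \<Rightarrow> real) \<Rightarrow> bool" where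
  "nash_eq n m A xs \<longleftrightarrow> (\<forall>i<n. xs i \<in> strat_simplex (m i)) \<and>
     (\<forall>i<n. \<forall>x\<in>strat_simplex (m i).
        ip (m i) (xs i) (payoff_vec n m A xs i) \<ge> ip (m i) x (payoff_vec n m A xs i))"

definition fully_mixed :: "nat \<Rightarrow> (nat \<Rightarrow> nat) \<Rightarrow> (nat \<Rightarrow> nat \<Rightarrow> real) \<Rightarrow> bool" where
  "fully_mixed n m xs \<longleftrightarrow> (\<forall>i<n. \<forall>k<m i. xs i k > 0)"

definition profiles :: "nat \<Rightarrow> (nat \<Rightarrow> nat) \<Rightarrow> (nat \<Rightarrow> nat) set" where
  "profiles n m = PiE {0..<n} (\<lambda>i. {0..<m i})"

definition step ::
  "nat \<Rightarrow> (nat \<Rightarrow> nat) \<Rightarrow> (nat \<Rightarrow> nat \<Rightarrow> nat \<Rightarrow> nat \<Rightarrow> real) \<Rightarrow> (nat \<Rightarrow> nat \<Rightarrow> real)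
     \<Rightarrow> (nat \<Rightarrow> nat) \<Rightarrow> (nat \<Rightarrow> nat \<Rightarrow> real)" where
  "step n m A y s = (\<lambda>i k. if i < n \<and> k < m i
       then y i k + (\<Sum>j\<in>{0..<n}-{i}. A i j k (s j)) else y i k)"

fun reach_t ::
  "nat \<Rightarrow> (nat \<Rightarrow> nat) \<Rightarrow> (nat \<Rightarrow> nat \<Rightarrow> nat \<Rightarrow> nat \<Rightarrow> real) \<Rightarrow> (nat \<Rightarrow> nat \<Rightarrow> real)
     \<Rightarrow> nat \<Rightarrow> (nat \<Rightarrow> nat \<Rightarrow> real) set" where
  "reach_t n m A y0 0 = {y0}"
| "reach_t n m A y0 (Suc t) = {step n m A y s | y s. y \<in> reach_t n m A y0 t \<and> s \<in> profiles n m}"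

definition reach ::
  "nat \<Rightarrow> (nat \<Rightarrow> nat) \<Rightarrow> (nat \<Rightarrow> nat \<Rightarrow> nat \<Rightarrow> nat \<Rightarrow> real) \<Rightarrow> (nat \<Rightarrow> nat \<Rightarrow> real)
     \<Rightarrow> (nat \<Rightarrow> nat \<Rightarrow> real) set" where
  "reach n m A y0 = (\<Union>t. reach_t n m A y0 t)"

definition Pbar ::
  "nat \<Rightarrow> (nat \<Rightarrow> nat) \<Rightarrow> (nat \<Rightarrow> nat \<Rightarrow> nat \<Rightarrow> nat \<Rightarrow> real)
     \<Rightarrow> (nat \<Rightarrow> (nat \<Rightarrow> real) \<Rightarrow> real)
     \<Rightarrow> (nat \<Rightarrow> nat \<Rightarrow> real) \<Rightarrow> (nat \<Rightarrow> nat \<Rightarrow> real) \<Rightarrow> real" where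
  "Pbar n m A h y y' =
     (\<Sum>s\<in>{s\<in>profiles n m. step n m A y s = y'}.
        \<Prod>j<n. grad_conj (m j) (h j) (y j) (s j))"

fun Pstep :: "'a set \<Rightarrow> ('a \<Rightarrow> 'a \<Rightarrow> real) \<Rightarrow> nat \<Rightarrow> 'a \<Rightarrow> 'a \<Rightarrow> real" where
  "Pstep S P 0 y y' = (if y = y' then 1 else 0)"
| "Pstep S P (Suc t) y y' = (\<Sum>\<^sub>\<infinity>z\<in>S. P y z * Pstep S P t z y')"

definition irreducible_chain :: "'a set \<Rightarrow> ('a \<Rightarrow> 'a \<Rightarrow> real) \<Rightarrow> bool" where
  "irreducible_chain S P \<longleftrightarrow> (\<forall>y\<in>S. \<forall>y'\<in>S. \<exists>t. Pstep S P t y y' > 0)"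

end

theory Submission
  imports Defs
begin

text \<open>Scaling the rational equilibrium by a common denominator D gives positive integers
  c j l with \<Sum>l c j l = D, and any D rounds in which every agent j plays each l exactly
  c j l times change the payoff vectors by D times the equilibrium payoff vector, i.e. by zero.
  Any move s can therefore be completed to such a zero-drift cycle, so every transition of the
  payoff dynamics can be undone.  Hence the reachable states form a strongly connected graph,
  and since every profile is played with positive probability, every path of this graph has
  positive probability.\<close>

definition step_incr ::
  "nat \<Rightarrow> (nat \<Rightarrow> nat) \<Rightarrow> (nat \<Rightarrow> nat \<Rightarrow> nat \<Rightarrow> nat \<Rightarrow> real) \<Rightarrow> (nat \<Rightarrow> nat)
     \<Rightarrow> nat \<Rightarrow> nat \<Rightarrow> real" where
  "step_incr n m A s = (\<lambda>i k. if i < n \<and> k < m i then (\<Sum>j\<in>{0..<n}-{i}. A i j k (s j)) else 0)"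

lemma step_eq_plus_step_incr: "step n m A y s = (\<lambda>i k. y i k + step_incr n m A s i k)"
  by (auto simp: step_def step_incr_def fun_eq_iff)

lemma foldl_step:
  "foldl (step n m A) y ss = (\<lambda>i k. y i k + (\<Sum>s\<leftarrow>ss. step_incr n m A s i k))"
  by (induction ss arbitrary: y) (auto simp: step_eq_plus_step_incr fun_eq_iff algebra_simps)

definition step_edges ::
  "nat \<Rightarrow> (nat \<Rightarrow> nat) \<Rightarrow> (nat \<Rightarrow> nat \<Rightarrow> nat \<Rightarrow> nat \<Rightarrow> real)
     \<Rightarrow> ((nat \<Rightarrow> nat \<Rightarrow> real) \<times> (nat \<Rightarrow> nat \<Rightarrow> real)) set" where
  "step_edges n m A = {(y, step n m A y s) | y s. s \<in> profiles n m}"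

lemma foldl_step_in_rtrancl_step_edges:
  "set ss \<subseteq> profiles n m \<Longrightarrow> (y, foldl (step n m A) y ss) \<in> (step_edges n m A)\<^sup>*"
proof (induction ss arbitrary: y)
  case (Cons s ss)
  then have "(y, step n m A y s) \<in> step_edges n m A" by (auto simp: step_edges_def)
  with Cons show ?case by (simp add: converse_rtrancl_into_rtrancl)
qed simp

lemma reach_eq_Image_rtrancl_step_edges:
  "reach n m A y0 = (step_edges n m A)\<^sup>* `` {y0}"
proof
  have "reach_t n m A y0 t \<subseteq> (step_edges n m A)\<^sup>* `` {y0}" for t
  proof (induction t)
    case (Suc t)
    then show ?case by (auto simp: step_edges_def intro: rtrancl_into_rtrancl)
  qed simp
  then show "reach n m A y0 \<subseteq> (step_edges n m A)\<^sup>* `` {y0}" by (auto simp: reach_def)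
next
  have "y \<in> reach n m A y0" if "(y0, y) \<in> (step_edges n m A)\<^sup>*" for y
    using that
  proof (induction rule: rtrancl_induct)
    case base
    have "y0 \<in> reach_t n m A y0 0" by simp
    then show ?case unfolding reach_def by blast
  next
    case (step y z)
    then obtain t s where "y \<in> reach_t n m A y0 t" "s \<in> profiles n m" "z = step n m A y s"
      by (auto simp: reach_def step_edges_def)
    then have "z \<in> reach_t n m A y0 (Suc t)" by auto
    then show ?case unfolding reach_def by blast
  qed
  then show "(step_edges n m A)\<^sup>* `` {y0} \<subseteq> reach n m A y0" by blast
qed

lemma rtrancl_sym_if_edges_reversible:
  assumes "\<And>x z. (x, z) \<in> E \<Longrightarrow> (z, x) \<in> E\<^sup>*" and "(x, z) \<in> E\<^sup>*"
  shows "(z, x) \<in> E\<^sup>*"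
  using assms(2) by (induction rule: rtrancl_induct) (auto intro: rtrancl_trans assms(1))

definition zero_drift_counts ::
  "nat \<Rightarrow> (nat \<Rightarrow> nat) \<Rightarrow> (nat \<Rightarrow> nat \<Rightarrow> nat \<Rightarrow> nat \<Rightarrow> real) \<Rightarrow> (nat \<Rightarrow> nat \<Rightarrow> nat)
     \<Rightarrow> nat \<Rightarrow> bool" where
  "zero_drift_counts n m A c D \<longleftrightarrow>
     (\<forall>j<n. (\<Sum>l<m j. c j l) = D) \<and> (\<forall>j<n. \<forall>l<m j. 1 \<le> c j l) \<and>
     (\<forall>i<n. \<forall>k<m i. (\<Sum>j\<in>{0..<n}-{i}. \<Sum>l<m j. real (c j l) * A i j k l) = 0)"

definition list_of_counts :: "(nat \<Rightarrow> nat) \<Rightarrow> nat \<Rightarrow> nat list" where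
  "list_of_counts c M = concat (map (\<lambda>l. replicate (c l) l) [0..<M])"

lemma length_list_of_counts: "length (list_of_counts c M) = (\<Sum>l<M. c l)"
  by (induction M) (auto simp: list_of_counts_def)

lemma set_list_of_counts: "set (list_of_counts c M) = {l. l < M \<and> 0 < c l}"
  by (auto simp: list_of_counts_def)

lemma sum_list_map_list_of_counts:
  "(\<Sum>l\<leftarrow>list_of_counts c M. f l) = (\<Sum>l<M. real (c l) * (f l :: real))"
  by (induction M) (auto simp: list_of_counts_def sum_list_replicate)

text \<open>Round u of the schedule in which agent j plays the list L j; the profiles are set to
  undefined outside the agents so that they are extensional, as members of profiles n m must be.\<close>
definition column_profiles :: "nat \<Rightarrow> (nat \<Rightarrow> nat list) \<Rightarrow> nat \<Rightarrow> (nat \<Rightarrow> nat) list" where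
  "column_profiles n L D = map (\<lambda>u j. if j < n then L j ! u else undefined) [0..<D]"

lemma column_profiles_subset_profiles:
  assumes "\<And>j. j < n \<Longrightarrow> length (L j) = D \<and> set (L j) \<subseteq> {0..<m j}"
  shows "set (column_profiles n L D) \<subseteq> profiles n m"
proof
  fix r assume "r \<in> set (column_profiles n L D)"
  then obtain u where u: "u < D" and r: "r = (\<lambda>j. if j < n then L j ! u else undefined)"
    by (auto simp: column_profiles_def)
  have "L j ! u < m j" if "j < n" for j
  proof -
    have "L j ! u \<in> set (L j)" using assms[OF that] u by simp
    then show ?thesis using assms[OF that] by auto
  qed
  then show "r \<in> profiles n m" by (auto simp: profiles_def r)
qed

lemma sum_step_incr_column_profiles:
  assumes "\<And>j. j < n \<Longrightarrow> length (L j) = D" and "i < n" "k < m i"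
  shows "(\<Sum>r\<leftarrow>column_profiles n L D. step_incr n m A r i k)
           = (\<Sum>j\<in>{0..<n}-{i}. \<Sum>l\<leftarrow>L j. A i j k l)"
proof -
  have "(\<Sum>r\<leftarrow>column_profiles n L D. step_incr n m A r i k)
          = (\<Sum>u<D. \<Sum>j\<in>{0..<n}-{i}. A i j k (L j ! u))"
    using assms(2,3)
    by (simp add: column_profiles_def step_incr_def interv_sum_list_conv_sum_set_nat atLeast0LessThan)
  also have "\<dots> = (\<Sum>j\<in>{0..<n}-{i}. \<Sum>u<D. A i j k (L j ! u))" by (rule sum.swap)
  also have "\<dots> = (\<Sum>j\<in>{0..<n}-{i}. \<Sum>l\<leftarrow>L j. A i j k l)"
    using assms(1) by (intro sum.cong refl) (simp add: sum_list_sum_nth atLeast0LessThan)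
  finally show ?thesis .
qed

lemma step_reversible:
  assumes counts: "zero_drift_counts n m A c D" and s: "s \<in> profiles n m"
  shows "(step n m A y s, y) \<in> (step_edges n m A)\<^sup>*"
proof -
  define L where "L j = list_of_counts (c j) (m j)" for j
  define rest where "rest = column_profiles n (\<lambda>j. remove1 (s j) (L j)) (D - 1)"
  have s_mem: "s j \<in> set (L j)" if "j < n" for j
    using s counts that by (fastforce simp: L_def set_list_of_counts profiles_def zero_drift_counts_def)
  have length_rest: "length (remove1 (s j) (L j)) = D - 1" if "j < n" for j
    using s_mem[OF that] counts that
    by (simp add: length_remove1 L_def length_list_of_counts zero_drift_counts_def)
  have "set rest \<subseteq> profiles n m"
    unfolding rest_def
  proof (rule column_profiles_subset_profiles)
    fix j assume "j < n"
    then show "length (remove1 (s j) (L j)) = D - 1 \<and> set (remove1 (s j) (L j)) \<subseteq> {0..<m j}"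
      using length_rest set_remove1_subset[of "s j" "L j"] by (auto simp: L_def set_list_of_counts)
  qed
  moreover have "step_incr n m A s i k + (\<Sum>r\<leftarrow>rest. step_incr n m A r i k) = 0" for i k
  proof (cases "i < n \<and> k < m i")
    case True
    have "(\<Sum>r\<leftarrow>rest. step_incr n m A r i k)
        = (\<Sum>j\<in>{0..<n}-{i}. \<Sum>l\<leftarrow>remove1 (s j) (L j). A i j k l)"
      unfolding rest_def using True length_rest by (intro sum_step_incr_column_profiles) auto
    then have "step_incr n m A s i k + (\<Sum>r\<leftarrow>rest. step_incr n m A r i k)
        = (\<Sum>j\<in>{0..<n}-{i}. A i j k (s j) + (\<Sum>l\<leftarrow>remove1 (s j) (L j). A i j k l))"
      using True by (simp add: step_incr_def sum.distrib)
    also have "\<dots> = (\<Sum>j\<in>{0..<n}-{i}. \<Sum>l<m j. real (c j l) * A i j k l)"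
      using s_mem by (intro sum.cong refl)
        (simp add: sum_list_map_remove1[symmetric] L_def sum_list_map_list_of_counts)
    also have "\<dots> = 0" using counts True by (simp add: zero_drift_counts_def)
    finally show ?thesis .
  qed (auto simp: step_incr_def)
  then have "foldl (step n m A) (step n m A y s) rest = y"
    by (simp add: foldl_step step_eq_plus_step_incr fun_eq_iff add.assoc)
  ultimately show ?thesis
    using foldl_step_in_rtrancl_step_edges[of rest n m "step n m A y s" A] by simp
qed

lemma reach_connected_if_steps_reversible:
  assumes "\<And>y s. s \<in> profiles n m \<Longrightarrow> (step n m A y s, y) \<in> (step_edges n m A)\<^sup>*"
    and "y \<in> reach n m A y0" "y' \<in> reach n m A y0"
  shows "(y, y') \<in> (step_edges n m A)\<^sup>*"
proof -
  have "(y0, y) \<in> (step_edges n m A)\<^sup>*" "(y0, y') \<in> (step_edges n m A)\<^sup>*"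
    using assms(2,3) by (auto simp: reach_eq_Image_rtrancl_step_edges)
  moreover have "(z, x) \<in> (step_edges n m A)\<^sup>*" if "(x, z) \<in> step_edges n m A" for x z
    using that assms(1) by (auto simp: step_edges_def)
  ultimately show ?thesis by (metis rtrancl_sym_if_edges_reversible rtrancl_trans)
qed

lemma common_denominator:
  assumes "finite I" "\<And>i. i \<in> I \<Longrightarrow> f i \<in> \<rat>"
  obtains d :: nat where "0 < d" "\<And>i. i \<in> I \<Longrightarrow> real d * f i \<in> \<int>"
  using assms
proof (induction I arbitrary: thesis rule: finite_induct)
  case empty
  show ?case by (rule empty.prems(1)[of 1]) auto
next
  case (insert x I)
  obtain d where d: "0 < d" "\<And>i. i \<in> I \<Longrightarrow> real d * f i \<in> \<int>"
    using insert.IH insert.prems(2) by blast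
  obtain a b where ab: "0 < b" "f x = of_int a / of_int b"
    using insert.prems(2)[of x] by (auto elim: Rats_cases')
  have scaled: "real (d * nat b) * f i \<in> \<int>" if "i \<in> insert x I" for i
  proof (cases "i = x")
    case True
    then show ?thesis using ab by simp
  next
    case False
    then have "real (d * nat b) * f i = real (nat b) * (real d * f i)" by simp
    also have "\<dots> \<in> \<int>" using d(2) False that by (simp add: Ints_mult)
    finally show ?thesis .
  qed
  show ?case by (rule insert.prems(1)[OF _ scaled]) (use d(1) ab(1) in simp_all)
qed

lemma zero_drift_counts_of_equilibrium:
  assumes simplex: "\<forall>i<n. xs i \<in> strat_simplex (m i)" and "fully_mixed n m xs"
    and "\<forall>i<n. \<forall>k<m i. xs i k \<in> \<rat>" and "\<forall>i<n. \<forall>k<m i. payoff_vec n m A xs i k = 0"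
  obtains c D where "zero_drift_counts n m A c D"
proof -
  obtain D :: nat where D: "0 < D" "\<And>p. p \<in> (SIGMA i:{..<n}. {..<m i}) \<Longrightarrow> real D * case_prod xs p \<in> \<int>"
    by (rule common_denominator[of "SIGMA i:{..<n}. {..<m i}" "case_prod xs"]) (use assms(3) in auto)
  define c where "c i k = nat \<lfloor>real D * xs i k\<rfloor>" for i k
  have c: "real (c i k) = real D * xs i k" "0 < real D * xs i k" if "i < n" "k < m i" for i k
  proof -
    show pos: "0 < real D * xs i k" using D(1) that assms(2) by (simp add: fully_mixed_def)
    have "real D * xs i k \<in> \<int>" using D(2)[of "(i, k)"] that by simp
    then show "real (c i k) = real D * xs i k" using pos by (simp add: c_def of_int_floor)
  qed
  have "(\<Sum>l<m j. c j l) = D" if "j < n" for j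
  proof -
    have "real (\<Sum>l<m j. c j l) = real D * (\<Sum>l<m j. xs j l)"
      using c that by (simp add: sum_distrib_left)
    also have "\<dots> = real D" using simplex that by (simp add: strat_simplex_def)
    finally show ?thesis by (simp only: of_nat_eq_iff)
  qed
  moreover have "(\<Sum>j\<in>{0..<n}-{i}. \<Sum>l<m j. real (c j l) * A i j k l)
                   = real D * payoff_vec n m A xs i k" if "i < n" for i k
    using c by (simp add: payoff_vec_def sum_distrib_left algebra_simps)
  moreover have "1 \<le> c j l" if "j < n" "l < m j" for j l
    using c[OF that] by simp
  ultimately have "zero_drift_counts n m A c D" using assms(4) by (simp add: zero_drift_counts_def)
  then show ?thesis by (rule that)
qed

lemma Pstep_nonneg:
  assumes "\<forall>y\<in>S. \<forall>w\<in>S. 0 \<le> P y w" and "z \<in> S"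
  shows "0 \<le> Pstep S P t z y'"
  using assms(2)
proof (induction t arbitrary: z)
  case (Suc t)
  then show ?case using assms(1) by (auto intro: infsum_nonneg)
qed simp

lemma Pstep_pos_if_rtrancl:
  assumes nonneg: "\<forall>y\<in>S. \<forall>w\<in>S. 0 \<le> P y w"
    and finite_support: "\<forall>y\<in>S. finite {w\<in>S. P y w \<noteq> 0}"
    and edges: "\<And>y w. (y, w) \<in> E \<Longrightarrow> y \<in> S \<Longrightarrow> w \<in> S \<and> 0 < P y w"
    and "(y, y') \<in> E\<^sup>*" "y \<in> S"
  shows "\<exists>t. 0 < Pstep S P t y y'"
  using assms(4,5)
proof (induction rule: converse_rtrancl_induct)
  case base
  show ?case by (rule exI[of _ 0]) simp
next
  case (step y z)
  then have z: "z \<in> S" "0 < P y z" using edges by auto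
  then obtain t where t: "0 < Pstep S P t z y'" using step.IH by blast
  define F where "F = {w\<in>S. P y w \<noteq> 0}"
  have "Pstep S P (Suc t) y y' = (\<Sum>\<^sub>\<infinity>w\<in>F. P y w * Pstep S P t w y')"
    by (simp add: F_def) (rule infsum_cong_neutral, auto)
  also have "\<dots> = (\<Sum>w\<in>F. P y w * Pstep S P t w y')"
    using finite_support step.prems by (simp add: F_def)
  also have "\<dots> > 0"
    using finite_support step.prems z t nonneg Pstep_nonneg[OF nonneg]
    by (intro sum_pos2[of F z]) (auto simp: F_def)
  finally show ?case by blast
qed

lemma irreducible_chainI:
  assumes "\<forall>y\<in>S. \<forall>w\<in>S. 0 \<le> P y w"
    and "\<forall>y\<in>S. finite {w\<in>S. P y w \<noteq> 0}"
    and "\<And>y w. (y, w) \<in> E \<Longrightarrow> y \<in> S \<Longrightarrow> w \<in> S \<and> 0 < P y w"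
    and "\<forall>y\<in>S. \<forall>y'\<in>S. (y, y') \<in> E\<^sup>*"
  shows "irreducible_chain S P"
  using Pstep_pos_if_rtrancl[OF assms(1-3)] assms(4) by (auto simp: irreducible_chain_def)

lemma finite_profiles: "finite (profiles n m)"
  by (simp add: profiles_def finite_PiE)

context
  fixes n :: nat and m :: "nat \<Rightarrow> nat" and A :: "nat \<Rightarrow> nat \<Rightarrow> nat \<Rightarrow> nat \<Rightarrow> real"
    and h :: "nat \<Rightarrow> (nat \<Rightarrow> real) \<Rightarrow> real" and y :: "nat \<Rightarrow> nat \<Rightarrow> real"
  assumes grad_pos: "\<forall>i<n. \<forall>k<m i. 0 < grad_conj (m i) (h i) (y i) k"
begin

lemma profile_prob_pos:
  "s \<in> profiles n m \<Longrightarrow> 0 < (\<Prod>j<n. grad_conj (m j) (h j) (y j) (s j))"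
  using grad_pos by (intro prod_pos) (auto simp: profiles_def PiE_iff)

lemma Pbar_nonneg: "0 \<le> Pbar n m A h y w"
  unfolding Pbar_def using profile_prob_pos by (intro sum_nonneg) (auto intro: less_imp_le)

lemma Pbar_step_pos: "s \<in> profiles n m \<Longrightarrow> 0 < Pbar n m A h y (step n m A y s)"
  unfolding Pbar_def using finite_profiles profile_prob_pos
  by (intro sum_pos2[where i = s]) (auto intro: less_imp_le)

end

lemma Pbar_eq_0: "w \<notin> step n m A y ` profiles n m \<Longrightarrow> Pbar n m A h y w = 0"
  unfolding Pbar_def by (subst sum.neutral) auto

theorem theorem4:
  fixes n :: nat and m :: "nat \<Rightarrow> nat"
    and A :: "nat \<Rightarrow> nat \<Rightarrow> nat \<Rightarrow> nat \<Rightarrow> real"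
    and h :: "nat \<Rightarrow> (nat \<Rightarrow> real) \<Rightarrow> real"
    and xs :: "nat \<Rightarrow> nat \<Rightarrow> real"
    and y0 :: "nat \<Rightarrow> nat \<Rightarrow> real"
  assumes strat_nonempty: "\<forall>i<n. m i \<ge> 1"
    and zero_sum: "network_zero_sum n m A"
    and nash: "nash_eq n m A xs"
    and mixed: "fully_mixed n m xs"
    and rational: "\<forall>i<n. \<forall>k<m i. xs i k \<in> \<rat>"
    and balanced: "\<forall>i<n. \<forall>k<m i. payoff_vec n m A xs i k = 0"
    and reg_convex: "\<forall>i<n. strictly_convex_on (strat_simplex (m i)) (h i)"
    and reg_max: "\<forall>i<n. \<forall>y. \<exists>x\<in>strat_simplex (m i).
                    \<forall>x'\<in>strat_simplex (m i). ip (m i) y x' - h i x' \<le> ip (m i) y x - h i x"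
    and reg_pos: "\<forall>y\<in>reach n m A y0. \<forall>i<n. \<forall>k<m i. grad_conj (m i) (h i) (y i) k > 0"
  shows "irreducible_chain (reach n m A y0) (Pbar n m A h)"
proof (rule irreducible_chainI[where E = "step_edges n m A"])
  obtain c D where counts: "zero_drift_counts n m A c D"
    using zero_drift_counts_of_equilibrium nash mixed rational balanced
    unfolding nash_eq_def by blast
  show "\<forall>y\<in>reach n m A y0. \<forall>y'\<in>reach n m A y0. (y, y') \<in> (step_edges n m A)\<^sup>*"
    using reach_connected_if_steps_reversible step_reversible[OF counts] by blast
  show "\<forall>y\<in>reach n m A y0. \<forall>w\<in>reach n m A y0. 0 \<le> Pbar n m A h y w"
    using reg_pos Pbar_nonneg by blast
  show "\<forall>y\<in>reach n m A y0. finite {w \<in> reach n m A y0. Pbar n m A h y w \<noteq> 0}"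
  proof
    fix y
    have "{w \<in> reach n m A y0. Pbar n m A h y w \<noteq> 0} \<subseteq> step n m A y ` profiles n m"
      using Pbar_eq_0 by blast
    then show "finite {w \<in> reach n m A y0. Pbar n m A h y w \<noteq> 0}"
      by (rule finite_subset) (simp add: finite_profiles)
  qed
  fix y w assume "(y, w) \<in> step_edges n m A" "y \<in> reach n m A y0"
  then show "w \<in> reach n m A y0 \<and> 0 < Pbar n m A h y w"
    using reg_pos Pbar_step_pos
    by (auto simp: step_edges_def reach_eq_Image_rtrancl_step_edges intro: rtrancl_into_rtrancl)
qed

end
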